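(* Let $c_0,c_1$ be non-degenerate convex loops. Then their length measures $\mu_0,\mu_1$ (which belong to $\mathcal{M}^0(S^1)$) are admissible.
   Context: Identify $S^1$ with $\mathbb{R}/2\pi\mathbb{Z}$ (arc-length measure $\mathrm{d}s$, geodesic distance $\operatorname{dist}$) and with the unit circle in $\mathbb{C}$. A convex loop is $c\in W^{1,1}(S^1,\mathbb{C})$ with $c'\neq0$ a.e. whose image is the boundary of a convex set in $\mathbb{C}$, positively oriented. Its length measure is $\mu_c:=(T_c)_\#(|c'|\,\mathrm{d}s)$, $T_c=c'/|c'|$. A convex loop is degenerate if $\mu_c=r\delta_x+r\delta_{-x}$ for some $r>0$, $x\in S^1$; otherwise non-degenerate. $\mathcal{M}^0(S^1)$ is the set of nonnegative measures $\mu$ on $S^1$ with $\int_{S^1}x\,\mathrm{d}\mu(x)=0\in\mathbb{C}$. $\ell(\zeta)=-\log(\cos^2\zeta)$ for $\zeta\in[0,\pi/2)$, $\ell(\zeta)=+\infty$ for $\zeta\ge\pi/2$. Two measures $\mu_0,\mu_1\in\mathcal{M}_+(S^1)$ are admissible if \[ \max\Big(\sup_{x\in\operatorname{supp}\mu_0}\inf_{y\in\operatorname{supp}\mu_1}\ell(\operatorname{dist}(x,y)),\ \sup_{y\in\operatorname{supp}\mu_1}\inf_{x\in\operatorname{supp}\mu_0}\ell(\operatorname{dist}(x,y))\Big)<\infty. \] *)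

theory Defs
  imports "HOL-Analysis.Analysis"
begin

text \<open>S^1 = R/2piZ: loops are 2pi-periodic maps real => complex; the weak derivative
  is given explicitly as cd (determined almost everywhere).\<close>

definition w11_loop :: "(real \<Rightarrow> complex) \<Rightarrow> (real \<Rightarrow> complex) \<Rightarrow> bool" where
  "w11_loop c cd \<longleftrightarrow>
     (\<forall>t. c (t + 2 * pi) = c t) \<and>
     set_integrable lborel {0..2 * pi} cd \<and>
     (\<forall>t\<in>{0..2 * pi}. c t = c 0 + (LINT s:{0..t}|lborel. cd s))"

text \<open>Convex loop: W^{1,1}, derivative nonzero a.e., image is the boundary of a convex
  set, positively oriented (the convex set lies to the left of the tangent a.e.).\<close>
definition convex_loop :: "(real \<Rightarrow> complex) \<Rightarrow> (real \<Rightarrow> complex) \<Rightarrow> bool" where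
  "convex_loop c cd \<longleftrightarrow>
     w11_loop c cd \<and>
     (AE s in lborel. s \<in> {0..2 * pi} \<longrightarrow> cd s \<noteq> 0) \<and>
     (\<exists>K. convex K \<and> c ` {0..2 * pi} = frontier K \<and>
        (\<forall>z\<in>K. AE s in lborel. s \<in> {0..2 * pi} \<longrightarrow> Im (cnj (cd s) * (z - c s)) \<ge> 0))"

text \<open>Length measure: push-forward of |c'| ds under T_c = c'/|c'| (sgn), a measure on the
  Borel sets of C concentrated on the unit circle S^1.\<close>
definition length_measure :: "(real \<Rightarrow> complex) \<Rightarrow> complex measure" where
  "length_measure cd =
     distr (density (restrict_space lborel {0..2 * pi}) (\<lambda>s. ennreal (cmod (cd s))))
           borel (\<lambda>s. sgn (cd s))"

definition degenerate_loop :: "(real \<Rightarrow> complex) \<Rightarrow> bool" where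
  "degenerate_loop cd \<longleftrightarrow>
     (\<exists>r::real. \<exists>x::complex. r > 0 \<and> cmod x = 1 \<and>
        (\<forall>A\<in>sets borel. emeasure (length_measure cd) A
            = ennreal r * indicator A x + ennreal r * indicator A (- x)))"

definition measure_support :: "complex measure \<Rightarrow> complex set" where
  "measure_support \<mu> = {x. \<forall>U. open U \<longrightarrow> x \<in> U \<longrightarrow> emeasure \<mu> U > 0}"

definition s1_dist :: "complex \<Rightarrow> complex \<Rightarrow> real" where
  "s1_dist x y = arccos (Re (x * cnj y))"

definition ell :: "real \<Rightarrow> ereal" where
  "ell z = (if z < pi / 2 then ereal (- ln ((cos z)\<^sup>2)) else \<infinity>)"

definition admissible :: "complex measure \<Rightarrow> complex measure \<Rightarrow> bool" where
  "admissible \<mu>0 \<mu>1 \<longleftrightarrow>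
     max (SUP x\<in>measure_support \<mu>0. INF y\<in>measure_support \<mu>1. ell (s1_dist x y))
         (SUP y\<in>measure_support \<mu>1. INF x\<in>measure_support \<mu>0. ell (s1_dist x y)) < \<infinity>"

end

theory Submission
  imports Defs
begin

text \<open>The length measure of a closed loop is a finite measure on the unit circle whose
  barycentre is the integral of the derivative over a period, namely 0. If its support missed
  an open half circle, the barycentre condition would force the measure onto the two endpoints
  of that half circle with equal masses, which is exactly degeneracy. So for a non-degenerate
  loop every point of the circle lies within angle less than pi/2 of the support, and by
  compactness uniformly so, which keeps ell of the distance to the other support bounded.\<close>

lemma sets_length_measure [simp, measurable_cong]:
  "sets (length_measure cd) = sets borel"
  by (simp add: length_measure_def)

lemma space_length_measure [simp]: "space (length_measure cd) = UNIV"
  using sets_eq_imp_space_eq[OF sets_length_measure] by simp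

lemma
  assumes "set_integrable lborel {0..2 * pi} cd"
  shows emeasure_length_measure_UNIV:
      "emeasure (length_measure cd) UNIV = (\<integral>\<^sup>+ s. cmod (cd s) \<partial>restrict_space lborel {0..2 * pi})"
    and AE_length_measure_norm_1: "AE z in length_measure cd. cmod z = 1"
    and integrable_length_measure_id: "integrable (length_measure cd) (\<lambda>z. z)"
    and integral_length_measure_id:
      "integral\<^sup>L (length_measure cd) (\<lambda>z. z) = (LINT s:{0..2 * pi}|lborel. cd s)"
proof -
  define M where "M = restrict_space lborel {0..2 * pi}"
  have integrable_cd: "integrable M cd"
    using assms unfolding M_def by (simp add: set_integrable_eq)
  then have [measurable]: "cd \<in> borel_measurable M" by auto
  have \<mu>: "length_measure cd = distr (density M (\<lambda>s. cmod (cd s))) borel (\<lambda>s. sgn (cd s))"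
    unfolding length_measure_def M_def ..
  have polar: "cmod (cd s) *\<^sub>R sgn (cd s) = cd s" for s
    by (cases "cd s = 0") (auto simp: sgn_div_norm)
  show "emeasure (length_measure cd) UNIV = (\<integral>\<^sup>+ s. cmod (cd s) \<partial>restrict_space lborel {0..2 * pi})"
    unfolding \<mu> M_def[symmetric] by (simp add: emeasure_distr emeasure_density)
  show "AE z in length_measure cd. cmod z = 1"
    unfolding \<mu> by (subst AE_distr_iff) (auto simp: AE_density norm_sgn)
  have "integrable (density M (\<lambda>s. cmod (cd s))) (\<lambda>s. sgn (cd s))"
    by (subst integrable_density) (auto simp: integrable_cd polar)
  then show "integrable (length_measure cd) (\<lambda>z. z)"
    unfolding \<mu> by (subst integrable_distr_eq) auto
  have "integral\<^sup>L (length_measure cd) (\<lambda>z. z) = integral\<^sup>L M cd"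
    unfolding \<mu> by (simp add: integral_distr integral_density polar)
  also have "\<dots> = (LINT s:{0..2 * pi}|lborel. cd s)"
    unfolding M_def set_lebesgue_integral_def by (subst integral_restrict_space) auto
  finally show "integral\<^sup>L (length_measure cd) (\<lambda>z. z) = (LINT s:{0..2 * pi}|lborel. cd s)" .
qed

lemma w11_loop_integral_derivative_eq_0:
  assumes "w11_loop c cd"
  shows "(LINT s:{0..2 * pi}|lborel. cd s) = 0"
proof -
  have "2 * pi \<in> {0..2 * pi}"
    by simp
  then have "c (2 * pi) = c 0 + (LINT s:{0..2 * pi}|lborel. cd s)"
    using assms unfolding w11_loop_def by blast
  moreover have "c (0 + 2 * pi) = c 0"
    using assms unfolding w11_loop_def by blast
  ultimately show ?thesis by simp
qed

lemma emeasure_length_measure_nonzero: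
  assumes integrable: "set_integrable lborel {0..2 * pi} cd"
    and nonzero: "AE s in lborel. s \<in> {0..2 * pi} \<longrightarrow> cd s \<noteq> 0"
  shows "emeasure (length_measure cd) UNIV \<noteq> 0"
proof
  assume "emeasure (length_measure cd) UNIV = 0"
  moreover have [measurable]: "cd \<in> borel_measurable (restrict_space lborel {0..2 * pi})"
    using integrable by (intro borel_measurable_integrable) (simp add: set_integrable_eq)
  ultimately have "AE s in restrict_space lborel {0..2 * pi}. cd s = 0"
    unfolding emeasure_length_measure_UNIV[OF integrable] by (subst (asm) nn_integral_0_iff_AE) auto
  then have "AE s in lborel. s \<in> {0..2 * pi} \<longrightarrow> cd s = 0"
    by (subst (asm) AE_restrict_space_iff) auto
  with nonzero have "AE s in lborel. s \<notin> {0..2 * pi}"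
    by eventually_elim auto
  then have "emeasure lborel {0..2 * pi} = 0"
    by (subst AE_iff_measurable[symmetric, where P = "\<lambda>s. s \<notin> {0..2 * pi}"]) auto
  then show False by simp
qed

text \<open>The finite measures of the paper's M^0(S^1), as Borel measures on the complex plane
  carried by the unit circle.\<close>

locale centred_circle_measure = finite_measure \<mu> for \<mu> :: "complex measure" +
  assumes sets_eq_borel: "sets \<mu> = sets borel"
    and AE_norm_eq_1: "AE z in \<mu>. cmod z = 1"
    and integrable_ident: "integrable \<mu> (\<lambda>z. z)"
    and barycentre_eq_0: "integral\<^sup>L \<mu> (\<lambda>z. z) = 0"

lemma centred_circle_measure_length_measure:
  assumes "w11_loop c cd"
  shows "centred_circle_measure (length_measure cd)"
proof -
  have integrable: "set_integrable lborel {0..2 * pi} cd"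
    using assms unfolding w11_loop_def by blast
  have "emeasure (length_measure cd) UNIV \<noteq> \<infinity>"
    using integrable
    by (simp add: emeasure_length_measure_UNIV set_integrable_eq integrable_iff_bounded less_top)
  then interpret finite_measure "length_measure cd"
    by (intro finite_measureI) simp
  show ?thesis
  proof
    show "AE z in length_measure cd. cmod z = 1"
      using integrable by (rule AE_length_measure_norm_1)
    show "integrable (length_measure cd) (\<lambda>z. z)"
      using integrable by (rule integrable_length_measure_id)
    show "integral\<^sup>L (length_measure cd) (\<lambda>z. z) = 0"
      using integral_length_measure_id[OF integrable] w11_loop_integral_derivative_eq_0[OF assms] by simp
  qed simp
qed

definition antipodal_pair_measure :: "complex measure \<Rightarrow> bool" where
  "antipodal_pair_measure \<mu> \<longleftrightarrow>
     (\<exists>r::real. \<exists>x::complex. r > 0 \<and> cmod x = 1 \<and>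
        (\<forall>A\<in>sets borel. emeasure \<mu> A = ennreal r * indicator A x + ennreal r * indicator A (- x)))"

lemma degenerate_loop_iff_antipodal_pair_measure:
  "degenerate_loop cd \<longleftrightarrow> antipodal_pair_measure (length_measure cd)"
  by (simp add: degenerate_loop_def antipodal_pair_measure_def)

lemma borel_measurable_cnj [measurable]: "cnj \<in> borel_measurable borel"
  by (rule borel_measurable_continuous_onI[OF continuous_on_cnj[OF continuous_on_id]])

lemma null_sets_open_disjoint_support:
  fixes \<mu> :: "complex measure"
  assumes sets: "sets \<mu> = sets borel" and "open U" and disjoint: "U \<inter> measure_support \<mu> = {}"
  shows "U \<in> null_sets \<mu>"
proof -
  define \<F> where "\<F> = {V. open V \<and> emeasure \<mu> V = 0}"
  obtain \<F>' where \<F>': "\<F>' \<subseteq> \<F>" "countable \<F>'" "\<Union>\<F>' = \<Union>\<F>"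
    using Lindelof[of \<F>] unfolding \<F>_def by auto
  have "(\<Union>V\<in>\<F>'. V) \<in> null_sets \<mu>"
    using \<F>' sets by (intro null_sets_UN') (auto simp: \<F>_def null_sets_def intro: borel_open)
  then have "\<Union>\<F> \<in> null_sets \<mu>"
    using \<F>'(3) by simp
  moreover have "U \<in> sets \<mu>"
    using sets \<open>open U\<close> by (simp add: borel_open)
  moreover have "U \<subseteq> \<Union>\<F>"
  proof
    fix y assume "y \<in> U"
    then have "y \<notin> measure_support \<mu>"
      using disjoint by blast
    then obtain V where "open V" "y \<in> V" "\<not> emeasure \<mu> V > 0"
      unfolding measure_support_def by auto
    then show "y \<in> \<Union>\<F>"
      unfolding \<F>_def by (auto simp: not_gr_zero)
  qed
  ultimately show ?thesis
    by (rule null_sets_subset)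
qed

lemma unit_orthogonal_cases:
  fixes x z :: complex
  assumes "cmod x = 1" "cmod z = 1" "Re (x * cnj z) = 0"
  shows "z = \<i> * x \<or> z = - (\<i> * x)"
proof -
  define w where "w = z * cnj x"
  have "Re w = 0"
    using assms(3) unfolding w_def by (simp add: mult.commute)
  moreover have "cmod w = 1"
    using assms(1,2) by (simp add: w_def norm_mult)
  ultimately have "w = \<i> \<or> w = - \<i>"
    by (cases w) (auto simp: cmod_def complex_eq_iff)
  moreover have "z = w * x"
    using assms(1) unfolding w_def by (simp add: mult.assoc complex_norm_square[symmetric] mult.commute)
  ultimately show ?thesis by auto
qed

context centred_circle_measure
begin

declare sets_eq_borel [measurable_cong]

lemma space_eq_UNIV [simp]: "space \<mu> = UNIV"
  using sets_eq_imp_space_eq[OF sets_eq_borel] by simp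

lemma integral_Re_mult_cnj: "integral\<^sup>L \<mu> (\<lambda>z. Re (x * cnj z)) = 0"
proof -
  have "integral\<^sup>L \<mu> (\<lambda>z. Re (x * cnj z)) = Re (integral\<^sup>L \<mu> (\<lambda>z. x * cnj z))"
    using integrable_ident by (intro integral_Re) auto
  also have "\<dots> = Re (x * cnj (integral\<^sup>L \<mu> (\<lambda>z. z)))"
    by simp
  finally show ?thesis by (simp add: barycentre_eq_0)
qed

lemma measure_support_subset_sphere: "measure_support \<mu> \<subseteq> sphere 0 1"
proof
  fix y assume y: "y \<in> measure_support \<mu>"
  have "open {z::complex. cmod z \<noteq> 1}"
    by (intro open_Collect_neq continuous_intros)
  moreover have "emeasure \<mu> {z. cmod z \<noteq> 1} = 0"
    using AE_norm_eq_1 sets_eq_borel \<open>open {z::complex. cmod z \<noteq> 1}\<close>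
    by (subst (asm) AE_iff_measurable[of "{z. cmod z \<noteq> 1}"]) auto
  ultimately show "y \<in> sphere 0 1"
    using y unfolding measure_support_def by force
qed

lemma AE_antipodal_if_support_in_halfplane:
  assumes x: "cmod x = 1" and halfplane: "\<forall>y\<in>measure_support \<mu>. Re (x * cnj y) \<le> 0"
  shows "AE z in \<mu>. z = \<i> * x \<or> z = - (\<i> * x)"
proof -
  have "{y. Re (x * cnj y) > 0} \<in> null_sets \<mu>"
    using halfplane by (intro null_sets_open_disjoint_support sets_eq_borel open_Collect_less continuous_intros)
      force
  then have "AE z in \<mu>. 0 \<le> - Re (x * cnj z)"
    by (rule AE_I') auto
  moreover have "integrable \<mu> (\<lambda>z. - Re (x * cnj z))"
    using integrable_ident by auto
  moreover have "integral\<^sup>L \<mu> (\<lambda>z. - Re (x * cnj z)) = 0"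
    unfolding integral_minus integral_Re_mult_cnj by simp
  ultimately have "AE z in \<mu>. - Re (x * cnj z) = 0"
    using integral_nonneg_eq_0_iff_AE by blast
  with AE_norm_eq_1 show ?thesis
    by eventually_elim (use unit_orthogonal_cases x in auto)
qed

lemma antipodal_pair_measure_if_AE_antipodal:
  assumes p: "cmod p = 1" and antipodal: "AE z in \<mu>. z = p \<or> z = - p"
    and nonzero: "emeasure \<mu> UNIV \<noteq> 0"
  shows "antipodal_pair_measure \<mu>"
proof -
  have sets [simp]: "A \<in> sets \<mu>" if "A \<in> sets borel" for A
    using that sets_eq_borel by simp
  have [measurable]: "{q} \<in> sets borel" for q :: complex
    by (simp add: borel_closed)
  have "p \<noteq> - p" using p by auto
  define a where "a = measure \<mu> {p}"
  text \<open>Testing the zero barycentre against Re (p * cnj z), which is 1 at p and -1 at -p,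
    equates the two masses.\<close>
  have Re_eq_indicator: "AE z in \<mu>. Re (p * cnj z) = indicator {p} z - indicator {- p} z"
    using antipodal
  proof eventually_elim
    case (elim z)
    have "Re (p * cnj p) = 1"
      using p by (simp add: complex_norm_square[symmetric])
    with elim \<open>p \<noteq> - p\<close> show ?case by auto
  qed
  have "0 = integral\<^sup>L \<mu> (\<lambda>z. Re (p * cnj z))"
    by (simp only: integral_Re_mult_cnj)
  also have "\<dots> = integral\<^sup>L \<mu> (\<lambda>z. indicator {p} z - indicator {- p} z :: real)"
    by (rule integral_cong_AE[OF _ _ Re_eq_indicator]) measurable
  also have "\<dots> = a - measure \<mu> {- p}"
    unfolding a_def by (subst Bochner_Integration.integral_diff) (auto simp: emeasure_eq_measure)
  finally have mass: "emeasure \<mu> {q} = a" if "q = p \<or> q = - p" for q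
    using that by (auto simp: emeasure_eq_measure a_def)
  have "emeasure \<mu> A = ennreal a * indicator A p + ennreal a * indicator A (- p)"
    if A: "A \<in> sets borel" for A
  proof -
    have "emeasure \<mu> A = emeasure \<mu> (A \<inter> {p} \<union> A \<inter> {- p})"
      using antipodal A by (intro emeasure_eq_AE) (auto elim!: AE_mp)
    also have "\<dots> = emeasure \<mu> (A \<inter> {p}) + emeasure \<mu> (A \<inter> {- p})"
      using A \<open>p \<noteq> - p\<close> by (intro plus_emeasure[symmetric]) auto
    finally show ?thesis
      using mass by (simp add: indicator_def Int_absorb1)
  qed
  moreover from this[of UNIV] nonzero have "a > 0"
    unfolding a_def by (simp add: ennreal_eq_0_iff)
  ultimately show ?thesis
    unfolding antipodal_pair_measure_def using p by blast
qed

lemma support_meets_open_halfplane: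
  assumes "emeasure \<mu> UNIV \<noteq> 0" and "\<not> antipodal_pair_measure \<mu>" and x: "cmod x = 1"
  shows "\<exists>y\<in>measure_support \<mu>. Re (x * cnj y) > 0"
proof (rule ccontr)
  assume "\<not> ?thesis"
  then have "AE z in \<mu>. z = \<i> * x \<or> z = - (\<i> * x)"
    using x by (intro AE_antipodal_if_support_in_halfplane) (auto simp: not_less)
  then have "antipodal_pair_measure \<mu>"
    using assms(1) x by (intro antipodal_pair_measure_if_AE_antipodal) (auto simp: norm_mult)
  with assms(2) show False ..
qed

end

lemma compact_uniformly_positive:
  fixes f :: "'a::topological_space \<Rightarrow> 'b \<Rightarrow> real"
  assumes "compact K" and continuous: "\<And>y. y \<in> S \<Longrightarrow> continuous_on UNIV (\<lambda>x. f x y)"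
    and positive: "\<And>x. x \<in> K \<Longrightarrow> \<exists>y\<in>S. f x y > 0"
  shows "\<exists>e>0. \<forall>x\<in>K. \<exists>y\<in>S. f x y > e"
proof -
  define V where "V e = (\<Union>y\<in>S. {x. e < f x y})" for e
  have "open (V e)" for e
    unfolding V_def using continuous by (intro open_UN ballI open_Collect_less continuous_intros)
  moreover have "K \<subseteq> (\<Union>e\<in>{0<..}. V e)"
  proof
    fix x assume "x \<in> K"
    then obtain y where "y \<in> S" "f x y > 0" using positive by blast
    then have "x \<in> V (f x y / 2)" "f x y / 2 \<in> {0<..}"
      unfolding V_def by force+
    then show "x \<in> (\<Union>e\<in>{0<..}. V e)" by blast
  qed
  ultimately obtain E where E: "E \<subseteq> {0<..}" "finite E" "K \<subseteq> (\<Union>e\<in>E. V e)"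
    using compactE_image[OF \<open>compact K\<close>] by metis
  define e where "e = Min (insert 1 E)"
  have "e > 0"
    using E unfolding e_def by auto
  moreover have "\<exists>y\<in>S. f x y > e" if "x \<in> K" for x
  proof -
    obtain d y where "d \<in> E" "y \<in> S" "d < f x y"
      using E(3) \<open>x \<in> K\<close> unfolding V_def by blast
    moreover have "e \<le> d"
      using \<open>d \<in> E\<close> E(2) unfolding e_def by simp
    ultimately show ?thesis by force
  qed
  ultimately show ?thesis by blast
qed

lemma convex_loop_support_uniformly_positive:
  assumes "convex_loop c cd" and "\<not> degenerate_loop cd"
  shows "measure_support (length_measure cd) \<subseteq> sphere 0 1"
    and "\<exists>e>0. \<forall>x\<in>sphere 0 1. \<exists>y\<in>measure_support (length_measure cd). Re (x * cnj y) > e"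
proof -
  have w11: "w11_loop c cd" and nonzero: "AE s in lborel. s \<in> {0..2 * pi} \<longrightarrow> cd s \<noteq> 0"
    using assms(1) unfolding convex_loop_def by auto
  interpret centred_circle_measure "length_measure cd"
    using centred_circle_measure_length_measure[OF w11] .
  show "measure_support (length_measure cd) \<subseteq> sphere 0 1"
    by (rule measure_support_subset_sphere)
  have "emeasure (length_measure cd) UNIV \<noteq> 0"
    using w11 nonzero unfolding w11_loop_def by (intro emeasure_length_measure_nonzero) auto
  then show "\<exists>e>0. \<forall>x\<in>sphere 0 1. \<exists>y\<in>measure_support (length_measure cd). Re (x * cnj y) > e"
    using assms(2) unfolding degenerate_loop_iff_antipodal_pair_measure
    by (intro compact_uniformly_positive compact_sphere continuous_intros support_meets_open_halfplane) auto
qed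

lemma ell_s1_dist_le:
  fixes x y :: complex
  assumes "cmod x = 1" "cmod y = 1" "Re (x * cnj y) > e" "e > 0"
  shows "ell (s1_dist x y) \<le> ereal (- ln (e\<^sup>2))"
proof -
  define t where "t = Re (x * cnj y)"
  have "t \<le> 1"
    using complex_Re_le_cmod[of "x * cnj y"] assms(1,2) by (simp add: t_def norm_mult)
  moreover have "t > e" using assms(3) by (simp add: t_def)
  ultimately have "arccos t < pi / 2" "cos (arccos t) = t"
    using arccos_less_arccos[of 0 t] assms(4) by auto
  then have "ell (s1_dist x y) = ereal (- ln (t\<^sup>2))"
    unfolding ell_def s1_dist_def t_def[symmetric] by simp
  also have "\<dots> \<le> ereal (- ln (e\<^sup>2))"
    using \<open>t > e\<close> assms(4) by (simp add: power_strict_mono)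
  finally show ?thesis .
qed

lemma SUP_INF_ell_s1_dist_finite:
  fixes S T :: "complex set"
  assumes "S \<subseteq> sphere 0 1" "T \<subseteq> sphere 0 1" "e > 0"
    and close: "\<forall>x\<in>sphere 0 1. \<exists>y\<in>T. Re (x * cnj y) > e"
  shows "(SUP x\<in>S. INF y\<in>T. ell (s1_dist x y)) < \<infinity>"
proof -
  have "(SUP x\<in>S. INF y\<in>T. ell (s1_dist x y)) \<le> ereal (- ln (e\<^sup>2))"
  proof (rule SUP_least)
    fix x assume "x \<in> S"
    then obtain y where "y \<in> T" "Re (x * cnj y) > e"
      using close assms(1) by blast
    then have "ell (s1_dist x y) \<le> ereal (- ln (e\<^sup>2))"
      using \<open>x \<in> S\<close> assms by (intro ell_s1_dist_le) auto
    with \<open>y \<in> T\<close> show "(INF y\<in>T. ell (s1_dist x y)) \<le> ereal (- ln (e\<^sup>2))"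
      by (meson INF_lower2)
  qed
  then show ?thesis by (rule le_less_trans) simp
qed

lemma s1_dist_commute: "s1_dist x y = s1_dist y x"
  unfolding s1_dist_def by (simp add: mult.commute)

theorem lemma3p1:
  fixes c0 c0' c1 c1' :: "real \<Rightarrow> complex"
  assumes "convex_loop c0 c0'" and "\<not> degenerate_loop c0'"
    and "convex_loop c1 c1'" and "\<not> degenerate_loop c1'"
  shows "admissible (length_measure c0') (length_measure c1')"
proof -
  let ?S0 = "measure_support (length_measure c0')"
  let ?S1 = "measure_support (length_measure c1')"
  note loop0 = convex_loop_support_uniformly_positive[OF assms(1,2)]
  note loop1 = convex_loop_support_uniformly_positive[OF assms(3,4)]
  obtain e0 where "e0 > 0" "\<forall>x\<in>sphere 0 1. \<exists>y\<in>?S0. Re (x * cnj y) > e0"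
    using loop0(2) by blast
  then have "(SUP y\<in>?S1. INF x\<in>?S0. ell (s1_dist y x)) < \<infinity>"
    using loop0(1) loop1(1) by (intro SUP_INF_ell_s1_dist_finite)
  moreover obtain e1 where "e1 > 0" "\<forall>x\<in>sphere 0 1. \<exists>y\<in>?S1. Re (x * cnj y) > e1"
    using loop1(2) by blast
  then have "(SUP x\<in>?S0. INF y\<in>?S1. ell (s1_dist x y)) < \<infinity>"
    using loop0(1) loop1(1) by (intro SUP_INF_ell_s1_dist_finite)
  moreover have "(SUP y\<in>?S1. INF x\<in>?S0. ell (s1_dist x y)) = (SUP y\<in>?S1. INF x\<in>?S0. ell (s1_dist y x))"
    by (intro SUP_cong INF_cong refl) (simp add: s1_dist_commute)
  ultimately show ?thesis
    unfolding admissible_def by (metis max_less_iff_conj)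
qed

end
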